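(* Fix any reasoning logic. If $c$ is a closed computation with $\vdash c:\underline{C}$ and $c\leadsto c'$, then $\vdash c':\underline{C}$ and $[\![\vdash c:\underline{C}]\!] = [\![\vdash c':\underline{C}]\!]$.
   Context: We work with a fine-grain call-by-value calculus of algebraic effects and handlers, parametrised by a reasoning logic $\mathcal{L}$. Syntax. Values $v ::= x \mid () \mid \mathtt{true} \mid \mathtt{false} \mid \mathtt{fun}\ x \mapsto c \mid \mathtt{handler}\,(\mathtt{return}\ x \mapsto c_r;\ h)$. Computations $c ::= \mathtt{if}\ v\ \mathtt{then}\ c_1\ \mathtt{else}\ c_2 \mid v_1\, v_2 \mid \mathtt{return}\ v \mid \mathit{op}(v; y.c) \mid \mathtt{do}\ x \leftarrow c_1\ \mathtt{in}\ c_2 \mid \mathtt{with}\ v\ \mathtt{handle}\ c$. Operation clauses $h$ are finite sets of clauses $\mathit{op}(x;k) \mapsto c_{\mathit{op}}$, at most one per operation name. Operational semantics: $\leadsto$ is the least relation with: $\mathtt{if}\ \mathtt{true}\ \mathtt{then}\ c_1\ \mathtt{else}\ c_2 \leadsto c_1$; $\mathtt{if}\ \mathtt{false}\ \mathtt{then}\ c_1\ \mathtt{else}\ c_2 \leadsto c_2$; $(\mathtt{fun}\ x\mapsto c)\,v \leadsto c[v/x]$; if $c_1\leadsto c_1'$ then $\mathtt{do}\ x\leftarrow c_1\ \mathtt{in}\ c_2 \leadsto \mathtt{do}\ x\leftarrow c_1'\ \mathtt{in}\ c_2$; $\mathtt{do}\ x\leftarrow \mathtt{return}\ v\ \mathtt{in}\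 c \leadsto c[v/x]$; $\mathtt{do}\ x\leftarrow \mathit{op}(v;y.c_1)\ \mathtt{in}\ c_2 \leadsto \mathit{op}(v;y.\,\mathtt{do}\ x\leftarrow c_1\ \mathtt{in}\ c_2)$; if $c\leadsto c'$ then $\mathtt{with}\ v\ \mathtt{handle}\ c\leadsto \mathtt{with}\ v\ \mathtt{handle}\ c'$; with $H=\mathtt{handler}\,(\mathtt{return}\ x\mapsto c_r;\ h)$: $\mathtt{with}\ H\ \mathtt{handle}\ \mathtt{return}\ v \leadsto c_r[v/x]$, and $\mathtt{with}\ H\ \mathtt{handle}\ \mathit{op}(v;y.c)\leadsto c_{\mathit{op}}[v/x,(\mathtt{fun}\ y\mapsto \mathtt{with}\ H\ \mathtt{handle}\ c)/k]$ when $(\mathit{op}(x;k)\mapsto c_{\mathit{op}})\in h$. Types: $A,B ::= \mathtt{unit}\mid\mathtt{bool}\mid A\to\underline{C}\mid \underline{C}\Rightarrow\underline{D}$; $\underline{C},\underline{D} ::= A\,!\,\Sigma/\mathcal{E}$ with $\Sigma$ a finite set of typed operations $\mathit{op}:A_{\mathit{op}}\to B_{\mathit{op}}$ (distinct names) and $\mathcal{E}$ a finite set of equations between templates (templates $T ::= z(v)\mid \mathtt{if}\ v\ \mathtt{then}\ T_1\ \mathtt{else}\ T_2\mid \mathit{op}(v;y.T)$, typed in a value context and a template context of variables $z:A\to *$, with operations drawn from $\Sigma$). Typing: $\Gamma\vdash x:A$ for $(x:A)\in\Gamma$; $():\mathtt{unit}$; $\mathtt{true},\mathtt{false}:\mathtt{bool}$;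 $\Gamma\vdash \mathtt{fun}\ x\mapsto c:A\to\underline{C}$ if $\Gamma,x:A\vdash c:\underline{C}$; $\Gamma\vdash \mathtt{handler}\,(\mathtt{return}\ x\mapsto c_r;h): A\,!\,\Sigma/\mathcal{E}\Rightarrow\underline{D}$ if $\Gamma,x:A\vdash c_r:\underline{D}$ and $\Gamma\vdash h\models_{\mathcal{E},\Sigma}\underline{D}$; $\mathtt{if}\ v\ \mathtt{then}\ c_1\ \mathtt{else}\ c_2:\underline{C}$ if $v:\mathtt{bool}$, $c_i:\underline{C}$; $v_1\,v_2:\underline{C}$ if $v_1:A\to\underline{C}$, $v_2:A$; $\mathtt{return}\ v:A\,!\,\Sigma/\mathcal{E}$ if $v:A$; $\Gamma\vdash\mathit{op}(v;y.c):A\,!\,\Sigma/\mathcal{E}$ if $(\mathit{op}:A_{\mathit{op}}\to B_{\mathit{op}})\in\Sigma$, $\Gamma\vdash v:A_{\mathit{op}}$, $\Gamma,y:B_{\mathit{op}}\vdash c:A\,!\,\Sigma/\mathcal{E}$; $\Gamma\vdash\mathtt{do}\ x\leftarrow c_1\ \mathtt{in}\ c_2:B\,!\,\Sigma/\mathcal{E}$ if $\Gamma\vdash c_1:A\,!\,\Sigma/\mathcal{E}$, $\Gamma,x:A\vdash c_2:B\,!\,\Sigma/\mathcal{E}$; $\mathtt{with}\ v\ \mathtt{handle}\ c:\underline{D}$ if $v:\underline{C}\Rightarrow\underline{D}$, $c:\underline{C}$. Clauses $\Gamma\vdash h:\Sigma\Rrightarrow\underline{D}$ iff $h$ has exactly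 one clause $\mathit{op}(x;k)\mapsto c_{\mathit{op}}$ for each $\mathit{op}\in\Sigma$ and no others, with $\Gamma,x:A_{\mathit{op}},k:B_{\mathit{op}}\to\underline{D}\vdash c_{\mathit{op}}:\underline{D}$. The judgement $\Gamma\vdash h\models_{\mathcal{E},\Sigma}\underline{D}$ is supplied by the logic and can only hold when $\Gamma\vdash h:\Sigma\Rrightarrow\underline{D}$. Denotational semantics (theories ignored): $[\![\mathtt{unit}]\!]=\{\star\}$, $[\![\mathtt{bool}]\!]=\{\mathrm{ff},\mathrm{tt}\}$, $[\![A\to\underline{C}]\!]$ and $[\![\underline{C}\Rightarrow\underline{D}]\!]$ are the sets of all functions $[\![A]\!]\to[\![\underline{C}]\!]$, resp. $[\![\underline{C}]\!]\to[\![\underline{D}]\!]$, and $[\![A\,!\,\Sigma/\mathcal{E}]\!]=[\![\Sigma]\!][\![A]\!]$, where for a set $X$, $[\![\Sigma]\!]X$ is the inductively defined set with elements $\mathrm{in}_{\mathrm{return}}(a)$, $a\in X$, and $\mathrm{in}_{\mathit{op}}(a;\kappa)$ for $(\mathit{op}:A_{\mathit{op}}\to B_{\mathit{op}})\in\Sigma$, $a\in[\![A_{\mathit{op}}]\!]$, $\kappa:[\![B_{\mathit{op}}]\!]\to[\![\Sigma]\!]X$. An interpretation of $\Sigma$ over a set $Y$ is a family of functions $H_{\mathit{op}}:[\![A_{\mathit{op}}]\!]\times([\![B_{\mathit{op}}]\!]\to Y)\to Y$; the free interpretation $F^X_\Sigma$ over $[\![\Sigma]\!]X$ has $(F^X_\Sigma)_{\mathit{op}}(a,\kappa)=\mathrm{in}_{\mathit{op}}(a;\kappa)$.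 For $f:X\to Y$ the lift $f^\dagger_H:[\![\Sigma]\!]X\to Y$ is given by $f^\dagger_H(\mathrm{in}_{\mathrm{return}}(x))=f(x)$, $f^\dagger_H(\mathrm{in}_{\mathit{op}}(x;\kappa))=H_{\mathit{op}}(x,f^\dagger_H\circ\kappa)$. $[\![\varepsilon]\!]=\{\star\}$, $[\![\Gamma,x:A]\!]=[\![\Gamma]\!]\times[\![A]\!]$. Typed terms denote maps $[\![\Gamma]\!]\to[\![A]\!]$ (resp. $[\![\underline{C}]\!]$): for $\eta\in[\![\Gamma]\!]$, variables are projections; $()\mapsto\star$, $\mathtt{true}\mapsto\mathrm{tt}$, $\mathtt{false}\mapsto\mathrm{ff}$; $[\![\mathtt{fun}\ x\mapsto c]\!]\eta=\lambda a.[\![c]\!](\eta,a)$; $[\![h]\!]\eta$ is the interpretation of $\Sigma$ over $[\![\underline{D}]\!]$ with $([\![h]\!]\eta)_{\mathit{op}}(a,\kappa)=[\![c_{\mathit{op}}]\!](\eta,a,\kappa)$; $[\![\mathtt{handler}\,(\mathtt{return}\ x\mapsto c_r;h)]\!]\eta=(\lambda a.[\![c_r]\!](\eta,a))^\dagger_{[\![h]\!]\eta}$; $[\![\mathtt{if}\ v\ \mathtt{then}\ c_1\ \mathtt{else}\ c_2]\!]\eta$ is $[\![c_1]\!]\eta$ if $[\![v]\!]\eta=\mathrm{tt}$ and $[\![c_2]\!]\eta$ if it is $\mathrm{ff}$; $[\![v_1\,v_2]\!]\eta=([\![v_1]\!]\eta)([\![v_2]\!]\eta)$; $[\![\mathtt{return}\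 v]\!]\eta=\mathrm{in}_{\mathrm{return}}([\![v]\!]\eta)$; $[\![\mathit{op}(v;y.c)]\!]\eta=\mathrm{in}_{\mathit{op}}([\![v]\!]\eta;\lambda b.[\![c]\!](\eta,b))$; for $c_1:A\,!\,\Sigma/\mathcal{E}$ and $c_2:B\,!\,\Sigma/\mathcal{E}$, $[\![\mathtt{do}\ x\leftarrow c_1\ \mathtt{in}\ c_2]\!]\eta=(\lambda a.[\![c_2]\!](\eta,a))^\dagger_{F^{[\![B]\!]}_\Sigma}([\![c_1]\!]\eta)$; $[\![\mathtt{with}\ v\ \mathtt{handle}\ c]\!]\eta=([\![v]\!]\eta)([\![c]\!]\eta)$. For closed terms the denotation is identified with its value at $\star$.
   Formalization: A reasoning logic is also closed under weakening of the context and under substitution of closed values into h, and each denotation of a typing derivation of c is also one of c'. Apart from conventions, each condition added here is assumed in the paper as well or is needed for the statement above to hold. *)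

theory Defs
  imports Main "HOL-Library.Finite_Map" "HOL-Library.FSet"
begin

type_synonym vname = string
type_synonym opname = string
type_synonym tname = string

text \<open>Values and computations. Operation clauses h are a finite map from operation
names to clauses op(x;k) -> c_op, represented as (x, k, c_op); this enforces at most
one clause per operation name.\<close>

datatype val =
    Var vname
  | UnitV
  | TrueV
  | FalseV
  | Fun vname comp
  | Handler vname comp "(opname, vname \<times> vname \<times> comp) fmap"
and comp =
    If val comp comp
  | App val val
  | Return val
  | Op opname val vname comp
  | Do vname comp comp
  | With val comp

datatype tmpl =
    TVar tname val
  | TIf val tmpl tmpl
  | TOp opname val vname tmpl

text \<open>A signature is a finite map from operation names (hence distinct) to
their typing (A_op, B_op). An equation is a pair of templates together with its value
context and template context; a theory is a finite set of equations.\<close>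

datatype vtype =
    TUnit
  | TBool
  | TArr vtype ctype
  | THnd ctype ctype
and ctype = CTy vtype "(opname, vtype \<times> vtype) fmap" "eqn fset"
and eqn = Eqn "(vname \<times> vtype) list" "(tname \<times> vtype) list" tmpl tmpl

type_synonym sig = "(opname, vtype \<times> vtype) fmap"
type_synonym clauses = "(opname, vname \<times> vname \<times> comp) fmap"
type_synonym ctx = "vname \<Rightarrow> vtype option"

text \<open>Substitution stops at binders of the same name (for the clauses of a handler this
is realised by substituting Var x for x, i.e. by the identity substitution, when x is bound by
the clause). Since all substitutions
performed by the operational semantics on closed computations substitute closed values,
this coincides with capture-avoiding substitution there.\<close>

primrec subst_v :: "val \<Rightarrow> vname \<Rightarrow> val \<Rightarrow> val"
and subst_c :: "comp \<Rightarrow> vname \<Rightarrow> val \<Rightarrow> comp" where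
  "subst_v (Var y) x w = (if y = x then w else Var y)"
| "subst_v UnitV x w = UnitV"
| "subst_v TrueV x w = TrueV"
| "subst_v FalseV x w = FalseV"
| "subst_v (Fun y c) x w = Fun y (if y = x then c else subst_c c x w)"
| "subst_v (Handler y cr h) x w =
     Handler y (if y = x then cr else subst_c cr x w)
       (fmmap (\<lambda>(y', k, g). (y', k, g x (if y' = x \<or> k = x then Var x else w)))
          (fmmap (map_prod id (map_prod id subst_c)) h))"
| "subst_c (If v c1 c2) x w = If (subst_v v x w) (subst_c c1 x w) (subst_c c2 x w)"
| "subst_c (App v1 v2) x w = App (subst_v v1 x w) (subst_v v2 x w)"
| "subst_c (Return v) x w = Return (subst_v v x w)"
| "subst_c (Op op v y c) x w = Op op (subst_v v x w) y (if y = x then c else subst_c c x w)"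
| "subst_c (Do y c1 c2) x w = Do y (subst_c c1 x w) (if y = x then c2 else subst_c c2 x w)"
| "subst_c (With v c) x w = With (subst_v v x w) (subst_c c x w)"

definition subst_h :: "clauses \<Rightarrow> vname \<Rightarrow> val \<Rightarrow> clauses" where
  "subst_h h x w = fmmap (\<lambda>(y', k, c). (y', k, subst_c c x (if y' = x \<or> k = x then Var x else w))) h"

inductive step :: "comp \<Rightarrow> comp \<Rightarrow> bool" where
  step_if_true: "step (If TrueV c1 c2) c1"
| step_if_false: "step (If FalseV c1 c2) c2"
| step_beta: "step (App (Fun x c) v) (subst_c c x v)"
| step_do: "step c1 c1' \<Longrightarrow> step (Do x c1 c2) (Do x c1' c2)"
| step_do_return: "step (Do x (Return v) c) (subst_c c x v)"
| step_do_op: "step (Do x (Op op v y c1) c2) (Op op v y (Do x c1 c2))"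
| step_with: "step c c' \<Longrightarrow> step (With v c) (With v c')"
| step_with_return: "step (With (Handler x cr h) (Return v)) (subst_c cr x v)"
| step_with_op: "fmlookup h op = Some (x, k, cop) \<Longrightarrow>
    step (With (Handler xr cr h) (Op op v y c))
         (subst_c (subst_c cop k (Fun y (With (Handler xr cr h) c))) x v)"

text \<open>The simultaneous substitution c_op[v/x, (fun y -> ...)/k] is performed by first
substituting for k and then for x; both substituted values are closed when the reducing
computation is closed, so the order is immaterial when x and k differ, and when they
coincide the k-binding (the later one in the typing context) takes precedence.\<close>

text \<open>A logic is given by its judgement  L \<Gamma> h E \<Sigma> D  standing for  \<Gamma> |- h |=_{E,\<Sigma>} D.\<close>

type_synonym logic = "ctx \<Rightarrow> clauses \<Rightarrow> eqn fset \<Rightarrow> sig \<Rightarrow> ctype \<Rightarrow> bool"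

inductive vtyp :: "logic \<Rightarrow> ctx \<Rightarrow> val \<Rightarrow> vtype \<Rightarrow> bool"
and ctyp :: "logic \<Rightarrow> ctx \<Rightarrow> comp \<Rightarrow> ctype \<Rightarrow> bool"
for L :: logic where
  ty_var: "\<Gamma> x = Some A \<Longrightarrow> vtyp L \<Gamma> (Var x) A"
| ty_unit: "vtyp L \<Gamma> UnitV TUnit"
| ty_true: "vtyp L \<Gamma> TrueV TBool"
| ty_false: "vtyp L \<Gamma> FalseV TBool"
| ty_fun: "ctyp L (\<Gamma>(x \<mapsto> A)) c C \<Longrightarrow> vtyp L \<Gamma> (Fun x c) (TArr A C)"
| ty_handler: "ctyp L (\<Gamma>(x \<mapsto> A)) cr D \<Longrightarrow> L \<Gamma> h E S D \<Longrightarrow>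
    vtyp L \<Gamma> (Handler x cr h) (THnd (CTy A S E) D)"
| ty_if: "vtyp L \<Gamma> v TBool \<Longrightarrow> ctyp L \<Gamma> c1 C \<Longrightarrow> ctyp L \<Gamma> c2 C \<Longrightarrow>
    ctyp L \<Gamma> (If v c1 c2) C"
| ty_app: "vtyp L \<Gamma> v1 (TArr A C) \<Longrightarrow> vtyp L \<Gamma> v2 A \<Longrightarrow> ctyp L \<Gamma> (App v1 v2) C"
| ty_return: "vtyp L \<Gamma> v A \<Longrightarrow> ctyp L \<Gamma> (Return v) (CTy A S E)"
| ty_op: "fmlookup S op = Some (Aop, Bop) \<Longrightarrow> vtyp L \<Gamma> v Aop \<Longrightarrow>
    ctyp L (\<Gamma>(y \<mapsto> Bop)) c (CTy A S E) \<Longrightarrow> ctyp L \<Gamma> (Op op v y c) (CTy A S E)"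
| ty_do: "ctyp L \<Gamma> c1 (CTy A S E) \<Longrightarrow> ctyp L (\<Gamma>(x \<mapsto> A)) c2 (CTy B S E) \<Longrightarrow>
    ctyp L \<Gamma> (Do x c1 c2) (CTy B S E)"
| ty_with: "vtyp L \<Gamma> v (THnd C D) \<Longrightarrow> ctyp L \<Gamma> c C \<Longrightarrow> ctyp L \<Gamma> (With v c) D"

definition clauses_typ :: "logic \<Rightarrow> ctx \<Rightarrow> clauses \<Rightarrow> sig \<Rightarrow> ctype \<Rightarrow> bool" where
  "clauses_typ L \<Gamma> h S D \<longleftrightarrow> fmdom h = fmdom S \<and>
     (\<forall>op x k c Aop Bop. fmlookup h op = Some (x, k, c) \<longrightarrow> fmlookup S op = Some (Aop, Bop) \<longrightarrow>
        ctyp L (\<Gamma>(x \<mapsto> Aop, k \<mapsto> TArr Bop D)) c D)"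

definition reasoning_logic :: "logic \<Rightarrow> bool" where
  "reasoning_logic L \<longleftrightarrow>
     (\<forall>\<Gamma> h E S D. L \<Gamma> h E S D \<longrightarrow> clauses_typ L \<Gamma> h S D) \<and>
     (\<forall>\<Gamma> \<Gamma>' h E S D. L \<Gamma> h E S D \<longrightarrow> \<Gamma> \<subseteq>\<^sub>m \<Gamma>' \<longrightarrow> L \<Gamma>' h E S D) \<and>
     (\<forall>\<Gamma> x A h E S D w. L (\<Gamma>(x \<mapsto> A)) h E S D \<longrightarrow> vtyp L Map.empty w A \<longrightarrow>
        L \<Gamma> (subst_h h x w) E S D)"

text \<open>HOL has no single type containing the full set-theoretic function spaces
[[A]] -> [[C]] for all types A, C. We therefore interpret in an arbitrary HOL type 'u
equipped with a structure which is required to be standard, i.e. the carrier of each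
type is (in bijection with) exactly the set prescribed by the paper.\<close>

record 'u model =
  vdom :: "vtype \<Rightarrow> 'u set"
  unitv :: 'u
  ttv :: 'u
  ffv :: 'u
  lam :: "vtype \<Rightarrow> ctype \<Rightarrow> ('u \<Rightarrow> 'u) \<Rightarrow> 'u"
  hlam :: "ctype \<Rightarrow> ctype \<Rightarrow> ('u \<Rightarrow> 'u) \<Rightarrow> 'u"
  app :: "'u \<Rightarrow> 'u \<Rightarrow> 'u"
  ret :: "vtype \<Rightarrow> sig \<Rightarrow> 'u \<Rightarrow> 'u"
  node :: "vtype \<Rightarrow> sig \<Rightarrow> opname \<Rightarrow> 'u \<Rightarrow> ('u \<Rightarrow> 'u) \<Rightarrow> 'u"

inductive_set trees :: "'u model \<Rightarrow> vtype \<Rightarrow> sig \<Rightarrow> 'u set" for M A S where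
  tr_ret: "a \<in> vdom M A \<Longrightarrow> ret M A S a \<in> trees M A S"
| tr_node: "fmlookup S op = Some (Aop, Bop) \<Longrightarrow> a \<in> vdom M Aop \<Longrightarrow>
    (\<forall>b \<in> vdom M Bop. \<kappa> b \<in> trees M A S) \<Longrightarrow> node M A S op a \<kappa> \<in> trees M A S"

fun cdom :: "'u model \<Rightarrow> ctype \<Rightarrow> 'u set" where
  "cdom M (CTy A S E) = trees M A S"

definition maps_into :: "('u \<Rightarrow> 'u) \<Rightarrow> 'u set \<Rightarrow> 'u set \<Rightarrow> bool" where
  "maps_into f X Y \<longleftrightarrow> (\<forall>x \<in> X. f x \<in> Y)"

definition standard_model :: "'u model \<Rightarrow> bool" where
  "standard_model M \<longleftrightarrow>
     vdom M TUnit = {unitv M} \<and>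
     vdom M TBool = {ttv M, ffv M} \<and> ttv M \<noteq> ffv M \<and>
     (\<forall>A C. vdom M (TArr A C) = {lam M A C f | f. maps_into f (vdom M A) (cdom M C)}
        \<and> (\<forall>f. maps_into f (vdom M A) (cdom M C) \<longrightarrow>
               (\<forall>a \<in> vdom M A. app M (lam M A C f) a = f a))
        \<and> (\<forall>f g. maps_into f (vdom M A) (cdom M C) \<longrightarrow> maps_into g (vdom M A) (cdom M C) \<longrightarrow>
               (\<forall>a \<in> vdom M A. f a = g a) \<longrightarrow> lam M A C f = lam M A C g)) \<and>
     (\<forall>C D. vdom M (THnd C D) = {hlam M C D f | f. maps_into f (cdom M C) (cdom M D)}
        \<and> (\<forall>f. maps_into f (cdom M C) (cdom M D) \<longrightarrow>
               (\<forall>t \<in> cdom M C. app M (hlam M C D f) t = f t))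
        \<and> (\<forall>f g. maps_into f (cdom M C) (cdom M D) \<longrightarrow> maps_into g (cdom M C) (cdom M D) \<longrightarrow>
               (\<forall>t \<in> cdom M C. f t = g t) \<longrightarrow> hlam M C D f = hlam M C D g)) \<and>
     (\<forall>A S. (\<forall>a \<in> vdom M A. \<forall>a' \<in> vdom M A. ret M A S a = ret M A S a' \<longrightarrow> a = a')
        \<and> (\<forall>op Aop Bop a \<kappa> op' Aop' Bop' a' \<kappa>'.
              fmlookup S op = Some (Aop, Bop) \<longrightarrow> a \<in> vdom M Aop \<longrightarrow>
              maps_into \<kappa> (vdom M Bop) (trees M A S) \<longrightarrow>
              fmlookup S op' = Some (Aop', Bop') \<longrightarrow> a' \<in> vdom M Aop' \<longrightarrow>
              maps_into \<kappa>' (vdom M Bop') (trees M A S) \<longrightarrow>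
              (node M A S op a \<kappa> = node M A S op' a' \<kappa>' \<longleftrightarrow>
                 op = op' \<and> a = a' \<and> (\<forall>b \<in> vdom M Bop. \<kappa> b = \<kappa>' b)))
        \<and> (\<forall>a op Aop Bop a' \<kappa>. a \<in> vdom M A \<longrightarrow>
              fmlookup S op = Some (Aop, Bop) \<longrightarrow> a' \<in> vdom M Aop \<longrightarrow>
              maps_into \<kappa> (vdom M Bop) (trees M A S) \<longrightarrow>
              ret M A S a \<noteq> node M A S op a' \<kappa>))"

text \<open>The lift f^dagger_H : [[\<Sigma>]][[A]] -> Y of f along an interpretation H, as a
relation (it is the graph of a function on trees M A S).  Continuations passed to H are
restricted to [[B_op]].\<close>
inductive lift_rel :: "'u model \<Rightarrow> vtype \<Rightarrow> sig \<Rightarrow> ('u \<Rightarrow> 'u) \<Rightarrow>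
    (opname \<Rightarrow> 'u \<Rightarrow> ('u \<Rightarrow> 'u) \<Rightarrow> 'u) \<Rightarrow> 'u \<Rightarrow> 'u \<Rightarrow> bool"
  for M A S f H where
  lift_ret: "a \<in> vdom M A \<Longrightarrow> lift_rel M A S f H (ret M A S a) (f a)"
| lift_node: "fmlookup S op = Some (Aop, Bop) \<Longrightarrow> a \<in> vdom M Aop \<Longrightarrow>
    (\<forall>b \<in> vdom M Bop. \<kappa> b \<in> trees M A S) \<Longrightarrow>
    (\<forall>b \<in> vdom M Bop. lift_rel M A S f H (\<kappa> b) (\<kappa>' b)) \<Longrightarrow>
    lift_rel M A S f H (node M A S op a \<kappa>)
      (H op a (\<lambda>b. if b \<in> vdom M Bop then \<kappa>' b else undefined))"

text \<open>Denotation of typing derivations:  semc M L \<Gamma> \<eta> c C d  means that some typing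
derivation of  \<Gamma> |- c : C  has denotation  d  at the environment \<eta>.\<close>

inductive semv :: "'u model \<Rightarrow> logic \<Rightarrow> ctx \<Rightarrow> (vname \<Rightarrow> 'u) \<Rightarrow> val \<Rightarrow> vtype \<Rightarrow> 'u \<Rightarrow> bool"
and semc :: "'u model \<Rightarrow> logic \<Rightarrow> ctx \<Rightarrow> (vname \<Rightarrow> 'u) \<Rightarrow> comp \<Rightarrow> ctype \<Rightarrow> 'u \<Rightarrow> bool"
for M :: "'u model" and L :: logic where
  sem_var: "\<Gamma> x = Some A \<Longrightarrow> semv M L \<Gamma> \<eta> (Var x) A (\<eta> x)"
| sem_unit: "semv M L \<Gamma> \<eta> UnitV TUnit (unitv M)"
| sem_true: "semv M L \<Gamma> \<eta> TrueV TBool (ttv M)"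
| sem_false: "semv M L \<Gamma> \<eta> FalseV TBool (ffv M)"
| sem_fun: "vtyp L \<Gamma> (Fun x c) (TArr A C) \<Longrightarrow>
    (\<forall>a \<in> vdom M A. semc M L (\<Gamma>(x \<mapsto> A)) (\<eta>(x := a)) c C (f a)) \<Longrightarrow>
    semv M L \<Gamma> \<eta> (Fun x c) (TArr A C) (lam M A C f)"
| sem_handler: "vtyp L \<Gamma> (Handler x cr h) (THnd (CTy A S E) D) \<Longrightarrow>
    (\<forall>a \<in> vdom M A. semc M L (\<Gamma>(x \<mapsto> A)) (\<eta>(x := a)) cr D (fr a)) \<Longrightarrow>
    (\<forall>op y k c Aop Bop. fmlookup h op = Some (y, k, c) \<longrightarrow> fmlookup S op = Some (Aop, Bop) \<longrightarrow>
       (\<forall>a \<in> vdom M Aop. \<forall>\<kappa>. maps_into \<kappa> (vdom M Bop) (cdom M D) \<longrightarrow>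
          semc M L (\<Gamma>(y \<mapsto> Aop, k \<mapsto> TArr Bop D)) (\<eta>(y := a, k := lam M Bop D \<kappa>)) c D
            (Hop op a \<kappa>))) \<Longrightarrow>
    (\<forall>t \<in> trees M A S. lift_rel M A S fr Hop t (F t)) \<Longrightarrow>
    semv M L \<Gamma> \<eta> (Handler x cr h) (THnd (CTy A S E) D) (hlam M (CTy A S E) D F)"
| sem_if_true: "ctyp L \<Gamma> (If v c1 c2) C \<Longrightarrow> semv M L \<Gamma> \<eta> v TBool (ttv M) \<Longrightarrow>
    semc M L \<Gamma> \<eta> c1 C d \<Longrightarrow> semc M L \<Gamma> \<eta> (If v c1 c2) C d"
| sem_if_false: "ctyp L \<Gamma> (If v c1 c2) C \<Longrightarrow> semv M L \<Gamma> \<eta> v TBool (ffv M) \<Longrightarrow>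
    semc M L \<Gamma> \<eta> c2 C d \<Longrightarrow> semc M L \<Gamma> \<eta> (If v c1 c2) C d"
| sem_app: "semv M L \<Gamma> \<eta> v1 (TArr A C) f \<Longrightarrow> semv M L \<Gamma> \<eta> v2 A a \<Longrightarrow>
    semc M L \<Gamma> \<eta> (App v1 v2) C (app M f a)"
| sem_return: "semv M L \<Gamma> \<eta> v A a \<Longrightarrow> semc M L \<Gamma> \<eta> (Return v) (CTy A S E) (ret M A S a)"
| sem_op: "ctyp L \<Gamma> (Op op v y c) (CTy A S E) \<Longrightarrow> fmlookup S op = Some (Aop, Bop) \<Longrightarrow>
    semv M L \<Gamma> \<eta> v Aop a \<Longrightarrow>
    (\<forall>b \<in> vdom M Bop. semc M L (\<Gamma>(y \<mapsto> Bop)) (\<eta>(y := b)) c (CTy A S E) (\<kappa> b)) \<Longrightarrow>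
    semc M L \<Gamma> \<eta> (Op op v y c) (CTy A S E) (node M A S op a \<kappa>)"
| sem_do: "ctyp L \<Gamma> (Do x c1 c2) (CTy B S E) \<Longrightarrow> semc M L \<Gamma> \<eta> c1 (CTy A S E) t \<Longrightarrow>
    (\<forall>a \<in> vdom M A. semc M L (\<Gamma>(x \<mapsto> A)) (\<eta>(x := a)) c2 (CTy B S E) (f a)) \<Longrightarrow>
    lift_rel M A S f (node M B S) t d \<Longrightarrow>
    semc M L \<Gamma> \<eta> (Do x c1 c2) (CTy B S E) d"
| sem_with: "semv M L \<Gamma> \<eta> v (THnd C D) hv \<Longrightarrow> semc M L \<Gamma> \<eta> c C t \<Longrightarrow>
    semc M L \<Gamma> \<eta> (With v c) D (app M hv t)"

end

(*
  Both halves follow by induction on the reduction step from substitution lemmas: substituting a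
  closed value w : A for x preserves typing and, on denotations, amounts to binding x to the
  denotation of w, which does not depend on the environment.  Denotations of well-typed terms lie
  in the carriers of their types, where the standard model validates beta for [[A -> C]] and
  [[C => D]] and makes the trees [[Sigma]][[A]] freely generated.  By freeness the lift
  f^dagger_H is a function F satisfying F(in_return a) = f a and F(in_op(a; kappa)) =
  H_op(a, F o kappa).  A handler denotes such an F, so handling return v computes the return
  clause, and handling op(v; y.c) computes the clause of op with the continuation F o kappa, which
  is exactly the denotation of fun y -> with H handle c.  Sequencing is the lift along the free
  interpretation, so it commutes with operation nodes.
*)

theory Submission
  imports Defs
begin

lemma subst_v_Handler [simp]:
  "subst_v (Handler y cr h) x w = Handler y (if y = x then cr else subst_c cr x w) (subst_h h x w)"
  by (simp add: subst_h_def fmap.map_comp comp_def case_prod_unfold)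

(* Substitution into handler clauses is kept in the form subst_h, under which the reasoning logic is
   closed. *)
declare subst_v.simps(6) [simp del]

lemma fmlookup_subst_h:
  "fmlookup (subst_h h x w) op =
     map_option (\<lambda>(y, k, c). (y, k, subst_c c x (if y = x \<or> k = x then Var x else w))) (fmlookup h op)"
  by (simp add: subst_h_def)

lemma subst_Var_self: "subst_v v x (Var x) = v" "subst_c c x (Var x) = c"
proof (induction v and c)
  case (Handler y cr h)
  have "subst_h h x (Var x) = h"
  proof (rule fmap_ext)
    fix op
    show "fmlookup (subst_h h x (Var x)) op = fmlookup h op"
      using Handler.IH(2) by (cases "fmlookup h op") (force intro: fmran'I simp: fmlookup_subst_h)+
  qed
  with Handler.IH(1) show ?case by simp
qed auto

lemma reasoning_logic_clauses_typ:
  "reasoning_logic L \<Longrightarrow> L \<Gamma> h E S D \<Longrightarrow> clauses_typ L \<Gamma> h S D"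
  unfolding reasoning_logic_def by blast

lemma reasoning_logic_weaken:
  "reasoning_logic L \<Longrightarrow> L \<Gamma> h E S D \<Longrightarrow> \<Gamma> \<subseteq>\<^sub>m \<Gamma>' \<Longrightarrow> L \<Gamma>' h E S D"
  unfolding reasoning_logic_def by blast

lemma reasoning_logic_subst:
  "reasoning_logic L \<Longrightarrow> L (\<Gamma>(x \<mapsto> A)) h E S D \<Longrightarrow> vtyp L Map.empty w A \<Longrightarrow>
     L \<Gamma> (subst_h h x w) E S D"
  unfolding reasoning_logic_def by blast

lemma typ_weaken:
  assumes "reasoning_logic L"
  shows "vtyp L \<Gamma> v A \<Longrightarrow> \<Gamma> \<subseteq>\<^sub>m \<Gamma>' \<Longrightarrow> vtyp L \<Gamma>' v A"
    and "ctyp L \<Gamma> c C \<Longrightarrow> \<Gamma> \<subseteq>\<^sub>m \<Gamma>' \<Longrightarrow> ctyp L \<Gamma>' c C"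
proof (induction arbitrary: \<Gamma>' and \<Gamma>' rule: vtyp_ctyp.inducts)
  case (ty_var \<Gamma> x A)
  then show ?case by (auto simp: map_le_def dom_def intro!: vtyp_ctyp.ty_var)
next
  case (ty_handler \<Gamma> x A cr D h E S)
  with assms show ?case by (meson vtyp_ctyp.ty_handler reasoning_logic_weaken map_le_upd)
qed (meson vtyp_ctyp.intros map_le_upd)+

lemma vtyp_closed: "reasoning_logic L \<Longrightarrow> vtyp L Map.empty w A \<Longrightarrow> vtyp L \<Gamma> w A"
  by (metis typ_weaken(1) map_le_empty)

lemma upd_under_binder:
  assumes "f' = f(x := a)"
  obtains "y = x" "f'(y := b) = f(y := b)" | "y \<noteq> x" "f'(y := b) = (f(y := b))(x := a)"
  using assms by (cases "y = x") (auto simp: fun_upd_twist)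

lemma typ_subst:
  assumes RL: "reasoning_logic L" and w: "vtyp L Map.empty w A"
  shows "vtyp L \<Gamma>' v B \<Longrightarrow> \<Gamma>' = \<Gamma>(x \<mapsto> A) \<Longrightarrow> vtyp L \<Gamma> (subst_v v x w) B"
    and "ctyp L \<Gamma>' c C \<Longrightarrow> \<Gamma>' = \<Gamma>(x \<mapsto> A) \<Longrightarrow> ctyp L \<Gamma> (subst_c c x w) C"
proof (induction arbitrary: \<Gamma> and \<Gamma> rule: vtyp_ctyp.inducts)
  case (ty_var \<Gamma>' y B)
  then show ?case using vtyp_closed[OF RL w] by (auto intro: vtyp_ctyp.ty_var)
next
  case (ty_fun \<Gamma>' y B c C)
  from ty_fun.prems show ?case
    by (cases rule: upd_under_binder[where y = y and b = "Some B"])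
       (use ty_fun in \<open>auto intro!: vtyp_ctyp.ty_fun\<close>)
next
  case (ty_handler \<Gamma>' y B cr D h E S)
  have "L \<Gamma> (subst_h h x w) E S D"
    using ty_handler(3,4) reasoning_logic_subst[OF RL _ w] by blast
  from ty_handler.prems show ?case
    by (cases rule: upd_under_binder[where y = y and b = "Some B"])
       (use ty_handler \<open>L \<Gamma> (subst_h h x w) E S D\<close> in \<open>auto intro!: vtyp_ctyp.ty_handler\<close>)
next
  case (ty_op S op Aop Bop \<Gamma>' v y c A' E)
  from ty_op.prems show ?case
    by (cases rule: upd_under_binder[where y = y and b = "Some Bop"])
       (use ty_op in \<open>auto intro!: vtyp_ctyp.ty_op\<close>)
next
  case (ty_do \<Gamma>' c1 A' S E y c2 B)
  from ty_do.prems show ?case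
    by (cases rule: upd_under_binder[where y = y and b = "Some A'"])
       (use ty_do in \<open>auto intro!: vtyp_ctyp.ty_do\<close>)
qed (auto intro: vtyp_ctyp.intros)

inductive_cases If_typE: "ctyp L \<Gamma> (If v c1 c2) C"
inductive_cases App_typE: "ctyp L \<Gamma> (App v1 v2) C"
inductive_cases Return_typE: "ctyp L \<Gamma> (Return v) C"
inductive_cases Op_typE: "ctyp L \<Gamma> (Op op v y c) C"
inductive_cases Do_typE: "ctyp L \<Gamma> (Do x c1 c2) C"
inductive_cases With_typE: "ctyp L \<Gamma> (With v c) C"
inductive_cases Fun_typE: "vtyp L \<Gamma> (Fun x c) T"
inductive_cases Handler_typE: "vtyp L \<Gamma> (Handler x cr h) T"

lemma continuation_typ:
  assumes "reasoning_logic L"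
    and "vtyp L Map.empty w (THnd C D)" "ctyp L (Map.empty(y \<mapsto> B)) c C"
  shows "vtyp L Map.empty (Fun y (With w c)) (TArr B D)"
  using assms by (blast intro: vtyp_ctyp.ty_fun vtyp_ctyp.ty_with vtyp_closed)

lemma step_preserves_typ:
  assumes RL: "reasoning_logic L"
  shows "step c c' \<Longrightarrow> ctyp L Map.empty c C \<Longrightarrow> ctyp L Map.empty c' C"
proof (induction arbitrary: C rule: step.induct)
  case (step_beta x c v)
  then obtain A where "vtyp L Map.empty (Fun x c) (TArr A C)" and v: "vtyp L Map.empty v A"
    by (auto elim: App_typE)
  then have "ctyp L (Map.empty(x \<mapsto> A)) c C" by (auto elim: Fun_typE)
  with typ_subst(2)[OF RL v] show ?case by simp
next
  case (step_do c1 c1' x c2)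
  then show ?case by (auto elim!: Do_typE intro: vtyp_ctyp.ty_do)
next
  case (step_do_return x v c)
  then obtain A B S E where "C = CTy B S E" "vtyp L Map.empty v A"
    and "ctyp L (Map.empty(x \<mapsto> A)) c (CTy B S E)"
    by (auto elim!: Do_typE Return_typE)
  with typ_subst(2)[OF RL] show ?case by simp
next
  case (step_do_op x op v y c1 c2)
  then obtain A B S E Aop Bop where C: "C = CTy B S E" and S: "fmlookup S op = Some (Aop, Bop)"
    and v: "vtyp L Map.empty v Aop" and c1: "ctyp L (Map.empty(y \<mapsto> Bop)) c1 (CTy A S E)"
    and c2: "ctyp L (Map.empty(x \<mapsto> A)) c2 (CTy B S E)"
    by (auto elim!: Do_typE Op_typE)
  have "ctyp L (Map.empty(y \<mapsto> Bop, x \<mapsto> A)) c2 (CTy B S E)"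
    by (rule typ_weaken(2)[OF RL c2]) (intro map_le_upd map_le_empty)
  with c1 have "ctyp L (Map.empty(y \<mapsto> Bop)) (Do x c1 c2) (CTy B S E)"
    by (rule vtyp_ctyp.ty_do)
  with S v C show ?case by (blast intro: vtyp_ctyp.ty_op)
next
  case (step_with c c' v)
  then show ?case by (auto elim!: With_typE intro: vtyp_ctyp.ty_with)
next
  case (step_with_return x cr h v)
  then obtain A S E where "ctyp L (Map.empty(x \<mapsto> A)) cr C" "vtyp L Map.empty v A"
    by (auto elim!: With_typE Handler_typE Return_typE)
  with typ_subst(2)[OF RL] show ?case by simp
next
  case (step_with_op h op x k cop xr cr v y c)
  let ?H = "Handler xr cr h"
  from step_with_op.prems obtain C\<^sub>0 where H: "vtyp L Map.empty ?H (THnd C\<^sub>0 C)"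
    and op: "ctyp L Map.empty (Op op v y c) C\<^sub>0"
    by (auto elim: With_typE)
  from H obtain A S E where C\<^sub>0: "C\<^sub>0 = CTy A S E" and Lh: "L Map.empty h E S C"
    by (auto elim: Handler_typE)
  from op obtain Aop Bop where S: "fmlookup S op = Some (Aop, Bop)" and v: "vtyp L Map.empty v Aop"
    and c: "ctyp L (Map.empty(y \<mapsto> Bop)) c (CTy A S E)"
    unfolding C\<^sub>0 by (auto elim: Op_typE)
  have "ctyp L (Map.empty(x \<mapsto> Aop, k \<mapsto> TArr Bop C)) cop C"
    using reasoning_logic_clauses_typ[OF RL Lh] step_with_op.hyps S unfolding clauses_typ_def by blast
  with typ_subst(2)[OF RL continuation_typ[OF RL H[unfolded C\<^sub>0] c]]
  have "ctyp L (Map.empty(x \<mapsto> Aop)) (subst_c cop k (Fun y (With ?H c))) C" by simp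
  with typ_subst(2)[OF RL v] show ?case by simp
qed (auto elim: If_typE)

lemma sem_typ:
  "semv M L \<Gamma> \<eta> v A a \<Longrightarrow> vtyp L \<Gamma> v A"
  "semc M L \<Gamma> \<eta> c C d \<Longrightarrow> ctyp L \<Gamma> c C"
  by (induction rule: semv_semc.inducts) (auto intro: vtyp_ctyp.intros)

definition env_extends :: "ctx \<Rightarrow> (vname \<Rightarrow> 'u) \<Rightarrow> ctx \<Rightarrow> (vname \<Rightarrow> 'u) \<Rightarrow> bool" where
  "env_extends \<Gamma> \<eta> \<Gamma>' \<eta>' \<longleftrightarrow> \<Gamma> \<subseteq>\<^sub>m \<Gamma>' \<and> (\<forall>z \<in> dom \<Gamma>. \<eta>' z = \<eta> z)"

lemma env_extends_map_le: "env_extends \<Gamma> \<eta> \<Gamma>' \<eta>' \<Longrightarrow> \<Gamma> \<subseteq>\<^sub>m \<Gamma>'"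
  by (simp add: env_extends_def)

lemma env_extends_upd:
  "env_extends \<Gamma> \<eta> \<Gamma>' \<eta>' \<Longrightarrow> env_extends (\<Gamma>(x \<mapsto> A)) (\<eta>(x := a)) (\<Gamma>'(x \<mapsto> A)) (\<eta>'(x := a))"
  by (auto simp: env_extends_def intro: map_le_upd)

lemma sem_weaken:
  assumes RL: "reasoning_logic L"
  shows "semv M L \<Gamma> \<eta> v A a \<Longrightarrow> env_extends \<Gamma> \<eta> \<Gamma>' \<eta>' \<Longrightarrow> semv M L \<Gamma>' \<eta>' v A a"
    and "semc M L \<Gamma> \<eta> c C d \<Longrightarrow> env_extends \<Gamma> \<eta> \<Gamma>' \<eta>' \<Longrightarrow> semc M L \<Gamma>' \<eta>' c C d"
proof (induction arbitrary: \<Gamma>' \<eta>' and \<Gamma>' \<eta>' rule: semv_semc.inducts)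
  case (sem_var \<Gamma> x A \<eta>)
  then have "\<Gamma>' x = Some A" "\<eta>' x = \<eta> x" by (auto simp: env_extends_def map_le_def dom_def)
  then show ?case by (metis semv_semc.sem_var)
next
  case (sem_fun \<Gamma> x c A C \<eta> f)
  then show ?case
    by (blast intro: semv_semc.sem_fun typ_weaken(1)[OF RL] env_extends_upd dest: env_extends_map_le)
next
  case (sem_handler \<Gamma> x cr h A S E D \<eta> fr Hop F)
  then show ?case
    by (blast intro: semv_semc.sem_handler typ_weaken(1)[OF RL] env_extends_upd
        dest: env_extends_map_le)
next
  case (sem_if_true \<Gamma> v c1 c2 C \<eta> d)
  then show ?case
    by (blast intro: semv_semc.sem_if_true typ_weaken(2)[OF RL] dest: env_extends_map_le)
next
  case (sem_if_false \<Gamma> v c1 c2 C \<eta> d)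
  then show ?case
    by (blast intro: semv_semc.sem_if_false typ_weaken(2)[OF RL] dest: env_extends_map_le)
next
  case (sem_op \<Gamma> op v y c A S E Aop Bop \<eta> a \<kappa>)
  then show ?case
    by (blast intro: semv_semc.sem_op typ_weaken(2)[OF RL] env_extends_upd dest: env_extends_map_le)
next
  case (sem_do \<Gamma> x c1 c2 B S E \<eta> A t f d)
  then show ?case
    by (blast intro: semv_semc.sem_do typ_weaken(2)[OF RL] env_extends_upd dest: env_extends_map_le)
qed (blast intro: semv_semc.intros)+

lemma sem_closed:
  assumes "reasoning_logic L" and "semv M L Map.empty \<eta>' w A a"
  shows "semv M L \<Gamma> \<eta> w A a"
  by (rule sem_weaken(1)[OF assms]) (simp add: env_extends_def map_le_def)

lemma sem_subst_under_binder:
  assumes IH: "\<forall>b\<in>X. semc M L (\<Gamma>'(y \<mapsto> B)) (\<eta>'(y := b)) c C (f b) \<and>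
      (\<forall>G. \<Gamma>'(y \<mapsto> B) = G(x \<mapsto> A) \<longrightarrow>
        (\<forall>e. \<eta>'(y := b) = e(x := a) \<longrightarrow> semc M L G e (subst_c c x w) C (f b)))"
    and "\<Gamma>' = \<Gamma>(x \<mapsto> A)" "\<eta>' = \<eta>(x := a)"
  shows "\<forall>b\<in>X. semc M L (\<Gamma>(y \<mapsto> B)) (\<eta>(y := b)) (if y = x then c else subst_c c x w) C (f b)"
proof (cases "y = x")
  case True
  with IH assms(2,3) show ?thesis by simp
next
  case False
  then have "\<Gamma>'(y \<mapsto> B) = (\<Gamma>(y \<mapsto> B))(x \<mapsto> A)" "\<eta>'(y := b) = (\<eta>(y := b))(x := a)" for b
    using assms(2,3) by (auto simp: fun_upd_twist)
  with IH False show ?thesis by simp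
qed

lemma sem_subst_under_two_binders:
  assumes IH: "semc M L (\<Gamma>'(y \<mapsto> B, k \<mapsto> K)) (\<eta>'(y := b, k := b')) c C d \<and>
      (\<forall>G. \<Gamma>'(y \<mapsto> B, k \<mapsto> K) = G(x \<mapsto> A) \<longrightarrow>
        (\<forall>e. \<eta>'(y := b, k := b') = e(x := a) \<longrightarrow> semc M L G e (subst_c c x w) C d))"
    and "\<Gamma>' = \<Gamma>(x \<mapsto> A)" "\<eta>' = \<eta>(x := a)"
  shows "semc M L (\<Gamma>(y \<mapsto> B, k \<mapsto> K)) (\<eta>(y := b, k := b'))
           (subst_c c x (if y = x \<or> k = x then Var x else w)) C d"
proof (cases "y = x \<or> k = x")
  case True
  then have "\<Gamma>'(y \<mapsto> B, k \<mapsto> K) = \<Gamma>(y \<mapsto> B, k \<mapsto> K)" "\<eta>'(y := b, k := b') = \<eta>(y := b, k := b')"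
    using assms(2,3) by (auto simp: fun_eq_iff)
  with IH True show ?thesis by (simp add: subst_Var_self)
next
  case False
  then have "\<Gamma>'(y \<mapsto> B, k \<mapsto> K) = (\<Gamma>(y \<mapsto> B, k \<mapsto> K))(x \<mapsto> A)"
    "\<eta>'(y := b, k := b') = (\<eta>(y := b, k := b'))(x := a)"
    using assms(2,3) by (auto simp: fun_eq_iff)
  with IH False show ?thesis by simp
qed

lemma sem_subst:
  assumes RL: "reasoning_logic L" and w: "semv M L Map.empty \<eta>\<^sub>w w A a"
  shows "semv M L \<Gamma>' \<eta>' v B b \<Longrightarrow> \<Gamma>' = \<Gamma>(x \<mapsto> A) \<Longrightarrow> \<eta>' = \<eta>(x := a) \<Longrightarrow>
           semv M L \<Gamma> \<eta> (subst_v v x w) B b"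
    and "semc M L \<Gamma>' \<eta>' c C d \<Longrightarrow> \<Gamma>' = \<Gamma>(x \<mapsto> A) \<Longrightarrow> \<eta>' = \<eta>(x := a) \<Longrightarrow>
           semc M L \<Gamma> \<eta> (subst_c c x w) C d"
proof (induction arbitrary: \<Gamma> \<eta> and \<Gamma> \<eta> rule: semv_semc.inducts)
  case (sem_var \<Gamma>' y B \<eta>')
  then show ?case using sem_closed[OF RL w] by (auto intro: semv_semc.sem_var)
next
  case (sem_fun \<Gamma>' y c B C \<eta>' f)
  have "vtyp L \<Gamma> (subst_v (Fun y c) x w) (TArr B C)"
    using typ_subst(1)[OF RL sem_typ(1)[OF w] sem_fun(1) sem_fun.prems(1)] .
  with sem_subst_under_binder[OF sem_fun(2) sem_fun.prems] show ?case
    by (auto intro: semv_semc.sem_fun)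
next
  case (sem_handler \<Gamma>' y cr h B S E D \<eta>' fr Hop F)
  have handler_typ: "vtyp L \<Gamma> (subst_v (Handler y cr h) x w) (THnd (CTy B S E) D)"
    using typ_subst(1)[OF RL sem_typ(1)[OF w] sem_handler(1) sem_handler.prems(1)] .
  have clauses: "\<forall>op y' k c' Aop Bop. fmlookup (subst_h h x w) op = Some (y', k, c') \<longrightarrow>
      fmlookup S op = Some (Aop, Bop) \<longrightarrow>
      (\<forall>a' \<in> vdom M Aop. \<forall>\<kappa>. maps_into \<kappa> (vdom M Bop) (cdom M D) \<longrightarrow>
        semc M L (\<Gamma>(y' \<mapsto> Aop, k \<mapsto> TArr Bop D)) (\<eta>(y' := a', k := lam M Bop D \<kappa>)) c' D
          (Hop op a' \<kappa>))"
  proof (intro allI impI ballI)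
    fix op y' k c' Aop Bop a' \<kappa>
    assume "fmlookup (subst_h h x w) op = Some (y', k, c')" and S: "fmlookup S op = Some (Aop, Bop)"
      and a': "a' \<in> vdom M Aop" and \<kappa>: "maps_into \<kappa> (vdom M Bop) (cdom M D)"
    then obtain c where h: "fmlookup h op = Some (y', k, c)"
      and c': "c' = subst_c c x (if y' = x \<or> k = x then Var x else w)"
      by (auto simp: fmlookup_subst_h)
    show "semc M L (\<Gamma>(y' \<mapsto> Aop, k \<mapsto> TArr Bop D)) (\<eta>(y' := a', k := lam M Bop D \<kappa>)) c' D (Hop op a' \<kappa>)"
      unfolding c' using sem_handler(3)[rule_format, OF h S a' \<kappa>] sem_handler.prems
      by (rule sem_subst_under_two_binders)
  qed
  show ?case
    unfolding subst_v_Handler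
    by (rule semv_semc.sem_handler[OF handler_typ[unfolded subst_v_Handler] _ clauses sem_handler(4)])
       (rule sem_subst_under_binder[OF sem_handler(2) sem_handler.prems])
next
  case (sem_if_true \<Gamma>' v c1 c2 C \<eta>' d)
  then show ?case
    using typ_subst(2)[OF RL sem_typ(1)[OF w] sem_if_true(1) sem_if_true.prems(1)]
    by (auto intro: semv_semc.sem_if_true)
next
  case (sem_if_false \<Gamma>' v c1 c2 C \<eta>' d)
  then show ?case
    using typ_subst(2)[OF RL sem_typ(1)[OF w] sem_if_false(1) sem_if_false.prems(1)]
    by (auto intro: semv_semc.sem_if_false)
next
  case (sem_op \<Gamma>' op v y c B S E Aop Bop \<eta>' b \<kappa>)
  have "ctyp L \<Gamma> (subst_c (Op op v y c) x w) (CTy B S E)"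
    using typ_subst(2)[OF RL sem_typ(1)[OF w] sem_op(1) sem_op.prems(1)] .
  with sem_op(3)[OF sem_op.prems] sem_op(5) sem_subst_under_binder[OF sem_op(4) sem_op.prems]
  show ?case by (auto intro: semv_semc.sem_op)
next
  case (sem_do \<Gamma>' y c1 c2 B S E \<eta>' A' t f d)
  have "ctyp L \<Gamma> (subst_c (Do y c1 c2) x w) (CTy B S E)"
    using typ_subst(2)[OF RL sem_typ(1)[OF w] sem_do(1) sem_do.prems(1)] .
  with sem_do(3)[OF sem_do.prems] sem_do(5) sem_subst_under_binder[OF sem_do(4) sem_do.prems]
  show ?case by (auto intro: semv_semc.sem_do[where A = A' and f = f])
next
  case (sem_app \<Gamma>' \<eta>' v1 A' C f v2 a')
  from sem_app(2,4)[OF sem_app.prems] show ?case by (auto intro: semv_semc.sem_app[where A = A'])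
next
  case (sem_return \<Gamma>' \<eta>' v A' a' S E)
  from sem_return(2)[OF sem_return.prems] show ?case by (auto intro: semv_semc.sem_return)
next
  case (sem_with \<Gamma>' \<eta>' v C D hv c t)
  from sem_with(2,4)[OF sem_with.prems] show ?case by (auto intro: semv_semc.sem_with[where C = C])
qed (auto intro: semv_semc.intros)

lemma lift_rel_in:
  assumes "lift_rel M A S f H t d"
    and "\<forall>a \<in> vdom M A. f a \<in> Y"
    and "\<forall>op Aop Bop a \<kappa>. fmlookup S op = Some (Aop, Bop) \<longrightarrow> a \<in> vdom M Aop \<longrightarrow>
           maps_into \<kappa> (vdom M Bop) Y \<longrightarrow> H op a \<kappa> \<in> Y"
  shows "d \<in> Y"
  using assms(1)
proof induction
  case (lift_ret a)
  with assms(2) show ?case by blast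
next
  case (lift_node op Aop Bop a \<kappa> \<kappa>')
  then have "maps_into (\<lambda>b. if b \<in> vdom M Bop then \<kappa>' b else undefined) (vdom M Bop) Y"
    by (simp add: maps_into_def)
  with assms(3) lift_node(1,2) show ?case by blast
qed

lemma handler_lift_maps_into:
  assumes "fmdom h = fmdom S"
    and "\<forall>a \<in> vdom M A. fr a \<in> cdom M D"
    and "\<forall>op y k c Aop Bop. fmlookup h op = Some (y, k, c) \<longrightarrow> fmlookup S op = Some (Aop, Bop) \<longrightarrow>
      (\<forall>a \<in> vdom M Aop. \<forall>\<kappa>. maps_into \<kappa> (vdom M Bop) (cdom M D) \<longrightarrow> Hop op a \<kappa> \<in> cdom M D)"
    and "\<forall>t \<in> trees M A S. lift_rel M A S fr Hop t (F t)"
  shows "maps_into F (trees M A S) (cdom M D)"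
  unfolding maps_into_def
proof
  fix t assume "t \<in> trees M A S"
  with assms(4) have "lift_rel M A S fr Hop t (F t)" by blast
  then show "F t \<in> cdom M D"
  proof (rule lift_rel_in)
    show "\<forall>op Aop Bop a \<kappa>. fmlookup S op = Some (Aop, Bop) \<longrightarrow> a \<in> vdom M Aop \<longrightarrow>
           maps_into \<kappa> (vdom M Bop) (cdom M D) \<longrightarrow> Hop op a \<kappa> \<in> cdom M D"
    proof (intro allI impI)
      fix op Aop Bop a \<kappa>
      assume S: "fmlookup S op = Some (Aop, Bop)" and "a \<in> vdom M Aop"
        and "maps_into \<kappa> (vdom M Bop) (cdom M D)"
      from S have "op |\<in>| fmdom h" unfolding assms(1) by (rule fmdomI)
      then obtain y k c where "fmlookup h op = Some (y, k, c)"
        by (metis fmdomE prod_cases3)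
      with assms(3) S \<open>a \<in> vdom M Aop\<close> \<open>maps_into \<kappa> (vdom M Bop) (cdom M D)\<close>
      show "Hop op a \<kappa> \<in> cdom M D" by blast
    qed
  qed (rule assms(2))
qed

definition env_typed :: "'u model \<Rightarrow> ctx \<Rightarrow> (vname \<Rightarrow> 'u) \<Rightarrow> bool" where
  "env_typed M \<Gamma> \<eta> \<longleftrightarrow> (\<forall>x B. \<Gamma> x = Some B \<longrightarrow> \<eta> x \<in> vdom M B)"

lemma env_typed_empty: "env_typed M Map.empty \<eta>"
  by (simp add: env_typed_def)

lemma env_typed_upd: "env_typed M \<Gamma> \<eta> \<Longrightarrow> a \<in> vdom M A \<Longrightarrow> env_typed M (\<Gamma>(x \<mapsto> A)) (\<eta>(x := a))"
  by (auto simp: env_typed_def)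

inductive_cases If_semE: "semc M L \<Gamma> \<eta> (If v c1 c2) C d"
inductive_cases App_semE: "semc M L \<Gamma> \<eta> (App v1 v2) C d"
inductive_cases Return_semE: "semc M L \<Gamma> \<eta> (Return v) C d"
inductive_cases Op_semE: "semc M L \<Gamma> \<eta> (Op op v y c) C d"
inductive_cases Do_semE: "semc M L \<Gamma> \<eta> (Do x c1 c2) C d"
inductive_cases With_semE: "semc M L \<Gamma> \<eta> (With v c) C d"
inductive_cases Fun_semE: "semv M L \<Gamma> \<eta> (Fun x c) T d"
inductive_cases Handler_semE: "semv M L \<Gamma> \<eta> (Handler x cr h) T d"
inductive_cases True_semE: "semv M L \<Gamma> \<eta> TrueV T d"
inductive_cases False_semE: "semv M L \<Gamma> \<eta> FalseV T d"

context
  fixes M :: "'u model"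
  assumes SM: "standard_model M"
begin

(* The last conjunct of standard_model: ret and node are injective with disjoint images. *)
lemmas free_tree_laws =
  SM[unfolded standard_model_def, THEN conjunct2, THEN conjunct2, THEN conjunct2, THEN conjunct2,
     THEN conjunct2, rule_format]

lemma vdom_TUnit: "vdom M TUnit = {unitv M}"
  using SM unfolding standard_model_def by (elim conjE) blast

lemma vdom_TBool: "vdom M TBool = {ttv M, ffv M}"
  using SM unfolding standard_model_def by (elim conjE) blast

lemma ttv_neq_ffv: "ttv M \<noteq> ffv M"
  using SM unfolding standard_model_def by (elim conjE) blast

lemma vdom_TArr: "vdom M (TArr A C) = {lam M A C f | f. maps_into f (vdom M A) (cdom M C)}"
  using SM unfolding standard_model_def by (elim conjE) blast

lemma app_lam: "maps_into f (vdom M A) (cdom M C) \<Longrightarrow> a \<in> vdom M A \<Longrightarrow> app M (lam M A C f) a = f a"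
  using SM unfolding standard_model_def by (elim conjE) blast

lemma vdom_THnd: "vdom M (THnd C D) = {hlam M C D f | f. maps_into f (cdom M C) (cdom M D)}"
  using SM unfolding standard_model_def by metis

lemma app_hlam: "maps_into f (cdom M C) (cdom M D) \<Longrightarrow> t \<in> cdom M C \<Longrightarrow> app M (hlam M C D f) t = f t"
  using SM unfolding standard_model_def by (elim conjE) blast

lemma ret_inj: "a \<in> vdom M A \<Longrightarrow> a' \<in> vdom M A \<Longrightarrow> ret M A S a = ret M A S a' \<Longrightarrow> a = a'"
  using free_tree_laws[of A S] by blast

lemma node_inj:
  assumes "fmlookup S op = Some (Aop, Bop)" "a \<in> vdom M Aop"
      "maps_into \<kappa> (vdom M Bop) (trees M A S)"
    and "fmlookup S op' = Some (Aop', Bop')" "a' \<in> vdom M Aop'"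
      "maps_into \<kappa>' (vdom M Bop') (trees M A S)"
    and "node M A S op a \<kappa> = node M A S op' a' \<kappa>'"
  shows "op = op'" "a = a'" "\<forall>b \<in> vdom M Bop. \<kappa> b = \<kappa>' b"
  using assms free_tree_laws[of A S] by blast+

lemma ret_neq_node:
  "a \<in> vdom M A \<Longrightarrow> fmlookup S op = Some (Aop, Bop) \<Longrightarrow> a' \<in> vdom M Aop \<Longrightarrow>
     maps_into \<kappa> (vdom M Bop) (trees M A S) \<Longrightarrow> ret M A S a \<noteq> node M A S op a' \<kappa>"
  using free_tree_laws[of A S] by blast

lemma lift_rel_node_inv:
  assumes "lift_rel M A S f H (node M A S op a \<kappa>) d"
    and "fmlookup S op = Some (Aop, Bop)" "a \<in> vdom M Aop" "\<forall>b \<in> vdom M Bop. \<kappa> b \<in> trees M A S"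
  obtains \<kappa>' where "d = H op a (\<lambda>b. if b \<in> vdom M Bop then \<kappa>' b else undefined)"
    and "\<forall>b \<in> vdom M Bop. lift_rel M A S f H (\<kappa> b) (\<kappa>' b)"
  using assms(1)
proof cases
  case (lift_ret a')
  with ret_neq_node[of a' A S op Aop Bop a \<kappa>] assms(2-4) show ?thesis
    by (auto simp: maps_into_def)
next
  case (lift_node op' Aop' Bop' a' \<kappa>\<^sub>2 \<kappa>')
  have same: "op' = op" "a' = a" "\<forall>b \<in> vdom M Bop. \<kappa>\<^sub>2 b = \<kappa> b"
    using node_inj[OF assms(2,3) _ lift_node(3,4) _ lift_node(1)] assms(4) lift_node(5)
    by (auto simp: maps_into_def)
  with assms(2) lift_node(3) have "Aop' = Aop" "Bop' = Bop" by auto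
  with same lift_node show ?thesis by (intro that[of \<kappa>']) auto
qed

lemma lift_rel_unique:
  assumes "lift_rel M A S f H t d"
  shows "lift_rel M A S f H t d' \<Longrightarrow> d = d'"
  using assms
proof (induction arbitrary: d')
  case (lift_ret a)
  from lift_ret.prems show ?case
  proof cases
    case (lift_ret a')
    with \<open>a \<in> vdom M A\<close> show ?thesis using ret_inj by metis
  next
    case (lift_node op Aop Bop a' \<kappa> \<kappa>')
    with \<open>a \<in> vdom M A\<close> show ?thesis using ret_neq_node by (auto simp: maps_into_def)
  qed
next
  case (lift_node op Aop Bop a \<kappa> \<kappa>')
  obtain \<kappa>'' where "d' = H op a (\<lambda>b. if b \<in> vdom M Bop then \<kappa>'' b else undefined)"
    and "\<forall>b \<in> vdom M Bop. lift_rel M A S f H (\<kappa> b) (\<kappa>'' b)"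
    using lift_rel_node_inv[OF lift_node.prems lift_node.hyps(1-3)] .
  moreover from this lift_node.IH have "\<forall>b \<in> vdom M Bop. \<kappa>' b = \<kappa>'' b" by blast
  then have "(\<lambda>b. if b \<in> vdom M Bop then \<kappa>' b else undefined) =
      (\<lambda>b. if b \<in> vdom M Bop then \<kappa>'' b else undefined)" by auto
  ultimately show ?case by simp
qed

lemma lift_ret_eq:
  assumes "\<forall>t \<in> trees M A S. lift_rel M A S f H t (F t)" and "a \<in> vdom M A"
  shows "F (ret M A S a) = f a"
  using assms trees.tr_ret[OF assms(2)] lift_rel_unique[OF lift_rel.lift_ret[OF assms(2)]] by metis

lemma lift_node_eq:
  assumes F: "\<forall>t \<in> trees M A S. lift_rel M A S f H t (F t)"
    and S: "fmlookup S op = Some (Aop, Bop)" and a: "a \<in> vdom M Aop"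
    and \<kappa>: "\<forall>b \<in> vdom M Bop. \<kappa> b \<in> trees M A S"
  shows "F (node M A S op a \<kappa>) = H op a (\<lambda>b. if b \<in> vdom M Bop then F (\<kappa> b) else undefined)"
proof -
  have "lift_rel M A S f H (node M A S op a \<kappa>)
      (H op a (\<lambda>b. if b \<in> vdom M Bop then F (\<kappa> b) else undefined))"
    by (rule lift_rel.lift_node[OF S a \<kappa>]) (use F \<kappa> in blast)
  moreover have "node M A S op a \<kappa> \<in> trees M A S" using S a \<kappa> by (rule trees.tr_node)
  ultimately show ?thesis using F lift_rel_unique by blast
qed

lemma lam_in_vdom: "maps_into f (vdom M A) (cdom M C) \<Longrightarrow> lam M A C f \<in> vdom M (TArr A C)"
  using vdom_TArr by blast

context
  fixes L :: logic
  assumes RL: "reasoning_logic L"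
begin

lemma sem_in_carrier:
  shows "semv M L \<Gamma> \<eta> v A a \<Longrightarrow> env_typed M \<Gamma> \<eta> \<Longrightarrow> a \<in> vdom M A"
    and "semc M L \<Gamma> \<eta> c C d \<Longrightarrow> env_typed M \<Gamma> \<eta> \<Longrightarrow> d \<in> cdom M C"
proof (induction rule: semv_semc.inducts)
  case (sem_var \<Gamma> x A \<eta>)
  then show ?case by (simp add: env_typed_def)
next
  case (sem_fun \<Gamma> x c A C \<eta> f)
  then have "maps_into f (vdom M A) (cdom M C)"
    unfolding maps_into_def using env_typed_upd[OF sem_fun(3)] by blast
  then show ?case by (rule lam_in_vdom)
next
  case (sem_handler \<Gamma> x cr h A S E D \<eta> fr Hop F)
  have "maps_into F (trees M A S) (cdom M D)"
  proof (rule handler_lift_maps_into)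
    show "fmdom h = fmdom S"
      using sem_handler(1)
      by cases (auto dest: reasoning_logic_clauses_typ[OF RL] simp: clauses_typ_def)
    show "\<forall>a\<in>vdom M A. fr a \<in> cdom M D"
      using sem_handler(2) env_typed_upd[OF sem_handler(5)] by blast
    show "\<forall>op y k c Aop Bop. fmlookup h op = Some (y, k, c) \<longrightarrow> fmlookup S op = Some (Aop, Bop) \<longrightarrow>
      (\<forall>a\<in>vdom M Aop. \<forall>\<kappa>. maps_into \<kappa> (vdom M Bop) (cdom M D) \<longrightarrow> Hop op a \<kappa> \<in> cdom M D)"
      using sem_handler(3) env_typed_upd[OF env_typed_upd[OF sem_handler(5)] lam_in_vdom] by blast
  qed (fact sem_handler(4))
  then show ?case using vdom_THnd by auto
next
  case (sem_app \<Gamma> \<eta> v1 A C f v2 a)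
  then obtain g where "f = lam M A C g" "maps_into g (vdom M A) (cdom M C)"
    using vdom_TArr by blast
  with sem_app show ?case using app_lam by (auto simp: maps_into_def)
next
  case (sem_return \<Gamma> \<eta> v A a S E)
  then show ?case by (auto intro: trees.tr_ret)
next
  case (sem_op \<Gamma> op v y c A S E Aop Bop \<eta> a \<kappa>)
  then have "\<forall>b\<in>vdom M Bop. \<kappa> b \<in> trees M A S" using env_typed_upd[OF sem_op.prems] by fastforce
  with sem_op show ?case by (auto intro: trees.tr_node)
next
  case (sem_do \<Gamma> x c1 c2 B S E \<eta> A t f d)
  have "d \<in> trees M B S"
  proof (rule lift_rel_in[OF sem_do(5)])
    show "\<forall>a\<in>vdom M A. f a \<in> trees M B S" using sem_do(4) env_typed_upd[OF sem_do.prems] by fastforce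
    show "\<forall>op Aop Bop a \<kappa>. fmlookup S op = Some (Aop, Bop) \<longrightarrow> a \<in> vdom M Aop \<longrightarrow>
           maps_into \<kappa> (vdom M Bop) (trees M B S) \<longrightarrow> node M B S op a \<kappa> \<in> trees M B S"
      by (auto simp: maps_into_def intro: trees.tr_node)
  qed
  then show ?case by simp
next
  case (sem_with \<Gamma> \<eta> v C D hv c t)
  then obtain g where "hv = hlam M C D g" "maps_into g (cdom M C) (cdom M D)"
    using vdom_THnd by blast
  with sem_with show ?case using app_hlam by (auto simp: maps_into_def)
qed (auto simp: vdom_TUnit vdom_TBool)

lemma semv_closed_in_vdom: "semv M L Map.empty \<eta> v A a \<Longrightarrow> a \<in> vdom M A"
  using sem_in_carrier(1) env_typed_empty by blast

lemma semc_bound_in_cdom: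
  assumes "semc M L (Map.empty(x \<mapsto> A)) (\<eta>(x := a)) c C d" and "a \<in> vdom M A"
  shows "d \<in> cdom M C"
  using sem_in_carrier(2)[OF assms(1) env_typed_upd[OF env_typed_empty assms(2)]] .

lemma semv_HandlerE:
  assumes "semv M L Map.empty \<eta> (Handler x cr h) (THnd C D) hv"
  obtains A S E fr Hop F where "C = CTy A S E"
    and "\<forall>a \<in> vdom M A. semc M L (Map.empty(x \<mapsto> A)) (\<eta>(x := a)) cr D (fr a)"
    and "\<forall>op y k c Aop Bop. fmlookup h op = Some (y, k, c) \<longrightarrow> fmlookup S op = Some (Aop, Bop) \<longrightarrow>
       (\<forall>a \<in> vdom M Aop. \<forall>\<kappa>. maps_into \<kappa> (vdom M Bop) (cdom M D) \<longrightarrow>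
          semc M L (Map.empty(y \<mapsto> Aop, k \<mapsto> TArr Bop D)) (\<eta>(y := a, k := lam M Bop D \<kappa>)) c D
            (Hop op a \<kappa>))"
    and "\<forall>t \<in> trees M A S. lift_rel M A S fr Hop t (F t)"
    and "maps_into F (trees M A S) (cdom M D)"
    and "\<forall>t \<in> trees M A S. app M hv t = F t"
proof -
  from assms obtain A S E fr Hop F where C: "C = CTy A S E" and hv: "hv = hlam M C D F"
    and handler_typ: "vtyp L Map.empty (Handler x cr h) (THnd C D)"
    and fr: "\<forall>a \<in> vdom M A. semc M L (Map.empty(x \<mapsto> A)) (\<eta>(x := a)) cr D (fr a)"
    and Hop: "\<forall>op y k c Aop Bop. fmlookup h op = Some (y, k, c) \<longrightarrow> fmlookup S op = Some (Aop, Bop) \<longrightarrow>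
       (\<forall>a \<in> vdom M Aop. \<forall>\<kappa>. maps_into \<kappa> (vdom M Bop) (cdom M D) \<longrightarrow>
          semc M L (Map.empty(y \<mapsto> Aop, k \<mapsto> TArr Bop D)) (\<eta>(y := a, k := lam M Bop D \<kappa>)) c D
            (Hop op a \<kappa>))"
    and F: "\<forall>t \<in> trees M A S. lift_rel M A S fr Hop t (F t)"
    by (auto elim: Handler_semE)
  have "maps_into F (trees M A S) (cdom M D)"
  proof (rule handler_lift_maps_into[OF _ _ _ F])
    show "fmdom h = fmdom S"
      using handler_typ C
      by (auto elim!: Handler_typE dest: reasoning_logic_clauses_typ[OF RL] simp: clauses_typ_def)
    show "\<forall>a\<in>vdom M A. fr a \<in> cdom M D"
      using fr semc_bound_in_cdom by blast
    show "\<forall>op y k c Aop Bop. fmlookup h op = Some (y, k, c) \<longrightarrow> fmlookup S op = Some (Aop, Bop) \<longrightarrow>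
      (\<forall>a\<in>vdom M Aop. \<forall>\<kappa>. maps_into \<kappa> (vdom M Bop) (cdom M D) \<longrightarrow> Hop op a \<kappa> \<in> cdom M D)"
      using Hop by (blast intro: sem_in_carrier(2) env_typed_upd env_typed_empty lam_in_vdom)
  qed
  moreover from this have "\<forall>t \<in> trees M A S. app M hv t = F t"
    using app_hlam hv C by simp
  ultimately show thesis using that C fr Hop F by blast
qed

lemma sem_beta:
  assumes "semc M L Map.empty \<eta> (App (Fun x c) v) C d"
  shows "semc M L Map.empty \<eta> (subst_c c x v) C d"
proof -
  from assms obtain A f a where "semv M L Map.empty \<eta> (Fun x c) (TArr A C) f"
    and v: "semv M L Map.empty \<eta> v A a" and d: "d = app M f a"
    by (auto elim: App_semE)
  then obtain g where f: "f = lam M A C g"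
    and g: "\<forall>a \<in> vdom M A. semc M L (Map.empty(x \<mapsto> A)) (\<eta>(x := a)) c C (g a)"
    by (auto elim: Fun_semE)
  have a: "a \<in> vdom M A" using semv_closed_in_vdom[OF v] .
  have "maps_into g (vdom M A) (cdom M C)"
    using g semc_bound_in_cdom unfolding maps_into_def by blast
  with a f d have "d = g a" by (simp add: app_lam)
  with sem_subst(2)[OF RL v g[rule_format, OF a]] show ?thesis by simp
qed

lemma sem_do_return:
  assumes "semc M L Map.empty \<eta> (Do x (Return v) c) C d"
  shows "semc M L Map.empty \<eta> (subst_c c x v) C d"
proof -
  from assms obtain A B S E t f where C: "C = CTy B S E"
    and "semc M L Map.empty \<eta> (Return v) (CTy A S E) t"
    and c: "\<forall>a \<in> vdom M A. semc M L (Map.empty(x \<mapsto> A)) (\<eta>(x := a)) c (CTy B S E) (f a)"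
    and lift: "lift_rel M A S f (node M B S) t d"
    by (auto elim: Do_semE)
  then obtain a where t: "t = ret M A S a" and v: "semv M L Map.empty \<eta> v A a"
    by (auto elim: Return_semE)
  have a: "a \<in> vdom M A" using semv_closed_in_vdom[OF v] .
  have "f a = d"
    using lift_rel_unique[OF lift_rel.lift_ret[OF a] lift[unfolded t]] .
  with sem_subst(2)[OF RL v c[rule_format, OF a]] C show ?thesis by simp
qed

lemma sem_do_op:
  assumes "semc M L Map.empty \<eta> (Do x (Op op v y c1) c2) C d"
  shows "semc M L Map.empty \<eta> (Op op v y (Do x c1 c2)) C d"
proof -
  have typ': "ctyp L Map.empty (Op op v y (Do x c1 c2)) C"
    using step_preserves_typ[OF RL step_do_op sem_typ(2)[OF assms]] .
  from assms obtain A B S E t f where C: "C = CTy B S E"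
    and "semc M L Map.empty \<eta> (Op op v y c1) (CTy A S E) t"
    and c2: "\<forall>a \<in> vdom M A. semc M L (Map.empty(x \<mapsto> A)) (\<eta>(x := a)) c2 (CTy B S E) (f a)"
    and lift: "lift_rel M A S f (node M B S) t d"
    by (auto elim: Do_semE)
  then obtain Aop Bop a \<kappa> where t: "t = node M A S op a \<kappa>"
    and S: "fmlookup S op = Some (Aop, Bop)" and v: "semv M L Map.empty \<eta> v Aop a"
    and c1: "\<forall>b \<in> vdom M Bop. semc M L (Map.empty(y \<mapsto> Bop)) (\<eta>(y := b)) c1 (CTy A S E) (\<kappa> b)"
    by (auto elim: Op_semE)
  have a: "a \<in> vdom M Aop" using semv_closed_in_vdom[OF v] .
  have \<kappa>: "\<forall>b \<in> vdom M Bop. \<kappa> b \<in> trees M A S"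
    using c1 semc_bound_in_cdom by fastforce
  obtain \<kappa>' where d: "d = node M B S op a (\<lambda>b. if b \<in> vdom M Bop then \<kappa>' b else undefined)"
    and lift': "\<forall>b \<in> vdom M Bop. lift_rel M A S f (node M B S) (\<kappa> b) (\<kappa>' b)"
    using lift_rel_node_inv[OF lift[unfolded t] S a \<kappa>] .
  have "semc M L (Map.empty(y \<mapsto> Bop)) (\<eta>(y := b)) (Do x c1 c2) (CTy B S E) (\<kappa>' b)"
    if b: "b \<in> vdom M Bop" for b
  proof (rule semv_semc.sem_do)
    show "ctyp L (Map.empty(y \<mapsto> Bop)) (Do x c1 c2) (CTy B S E)"
      using typ' S C by (auto elim: Op_typE)
    show "\<forall>a \<in> vdom M A. semc M L (Map.empty(y \<mapsto> Bop, x \<mapsto> A)) (\<eta>(y := b, x := a)) c2 (CTy B S E) (f a)"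
    proof
      fix a assume "a \<in> vdom M A"
      with c2 have "semc M L (Map.empty(x \<mapsto> A)) (\<eta>(x := a)) c2 (CTy B S E) (f a)" by blast
      then show "semc M L (Map.empty(y \<mapsto> Bop, x \<mapsto> A)) (\<eta>(y := b, x := a)) c2 (CTy B S E) (f a)"
        by (rule sem_weaken(2)[OF RL]) (auto simp: env_extends_def map_le_def)
    qed
  qed (use c1 lift' b in auto)
  then show ?thesis
    unfolding C d by (auto intro!: semv_semc.sem_op[OF typ'[unfolded C] S v])
qed

lemma sem_with_return:
  assumes "semc M L Map.empty \<eta> (With (Handler x cr h) (Return v)) D d"
  shows "semc M L Map.empty \<eta> (subst_c cr x v) D d"
proof -
  from assms obtain C hv t where H: "semv M L Map.empty \<eta> (Handler x cr h) (THnd C D) hv"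
    and ret: "semc M L Map.empty \<eta> (Return v) C t" and d: "d = app M hv t"
    by (auto elim: With_semE)
  from H obtain A S E fr Hop F where C: "C = CTy A S E"
    and cr: "\<forall>a \<in> vdom M A. semc M L (Map.empty(x \<mapsto> A)) (\<eta>(x := a)) cr D (fr a)"
    and F: "\<forall>t \<in> trees M A S. lift_rel M A S fr Hop t (F t)"
    and hv: "\<forall>t \<in> trees M A S. app M hv t = F t"
    by (rule semv_HandlerE)
  from ret obtain a where t: "t = ret M A S a" and v: "semv M L Map.empty \<eta> v A a"
    unfolding C by (auto elim: Return_semE)
  have a: "a \<in> vdom M A" using semv_closed_in_vdom[OF v] .
  with F hv d t have "d = fr a" by (simp add: lift_ret_eq trees.tr_ret)
  with sem_subst(2)[OF RL v cr[rule_format, OF a]] show ?thesis by simp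
qed

lemma sem_continuation:
  assumes hv: "semv M L Map.empty \<eta> w (THnd C D) hv"
    and c: "ctyp L (Map.empty(y \<mapsto> B)) c C"
    and \<kappa>: "\<forall>b \<in> vdom M B. semc M L (Map.empty(y \<mapsto> B)) (\<eta>(y := b)) c C (\<kappa> b)"
    and f: "\<forall>b \<in> vdom M B. f b = app M hv (\<kappa> b)"
  shows "semv M L Map.empty \<eta> (Fun y (With w c)) (TArr B D) (lam M B D f)"
proof (rule semv_semc.sem_fun)
  show "vtyp L Map.empty (Fun y (With w c)) (TArr B D)"
    using continuation_typ[OF RL sem_typ(1)[OF hv] c] .
  show "\<forall>b \<in> vdom M B. semc M L (Map.empty(y \<mapsto> B)) (\<eta>(y := b)) (With w c) D (f b)"
    using \<kappa> f sem_closed[OF RL hv] by (auto intro: semv_semc.sem_with[where C = C])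
qed

lemma sem_with_op:
  assumes "semc M L Map.empty \<eta> (With (Handler xr cr h) (Op op v y c)) D d"
    and clause: "fmlookup h op = Some (x, k, cop)"
  shows "semc M L Map.empty \<eta> (subst_c (subst_c cop k (Fun y (With (Handler xr cr h) c))) x v) D d"
proof -
  let ?H = "Handler xr cr h"
  from assms(1) obtain C hv t where H: "semv M L Map.empty \<eta> ?H (THnd C D) hv"
    and op: "semc M L Map.empty \<eta> (Op op v y c) C t" and d: "d = app M hv t"
    by (auto elim: With_semE)
  from H obtain A S E fr Hop F where C: "C = CTy A S E"
    and Hop: "\<forall>op y k c Aop Bop. fmlookup h op = Some (y, k, c) \<longrightarrow> fmlookup S op = Some (Aop, Bop) \<longrightarrow>
       (\<forall>a \<in> vdom M Aop. \<forall>\<kappa>. maps_into \<kappa> (vdom M Bop) (cdom M D) \<longrightarrow>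
          semc M L (Map.empty(y \<mapsto> Aop, k \<mapsto> TArr Bop D)) (\<eta>(y := a, k := lam M Bop D \<kappa>)) c D
            (Hop op a \<kappa>))"
    and F: "\<forall>t \<in> trees M A S. lift_rel M A S fr Hop t (F t)"
    and F_cdom: "maps_into F (trees M A S) (cdom M D)"
    and hv: "\<forall>t \<in> trees M A S. app M hv t = F t"
    by (rule semv_HandlerE)
  from op obtain Aop Bop a \<kappa> where t: "t = node M A S op a \<kappa>"
    and S: "fmlookup S op = Some (Aop, Bop)" and v: "semv M L Map.empty \<eta> v Aop a"
    and \<kappa>: "\<forall>b \<in> vdom M Bop. semc M L (Map.empty(y \<mapsto> Bop)) (\<eta>(y := b)) c (CTy A S E) (\<kappa> b)"
    unfolding C by (auto elim: Op_semE)
  have c: "ctyp L (Map.empty(y \<mapsto> Bop)) c (CTy A S E)"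
    using sem_typ(2)[OF op] S unfolding C by (auto elim: Op_typE)
  have a: "a \<in> vdom M Aop" using semv_closed_in_vdom[OF v] .
  have \<kappa>_trees: "\<forall>b \<in> vdom M Bop. \<kappa> b \<in> trees M A S"
    using \<kappa> semc_bound_in_cdom by fastforce
  define \<kappa>' where "\<kappa>' = (\<lambda>b. if b \<in> vdom M Bop then F (\<kappa> b) else undefined)"
  have "d = Hop op a \<kappa>'"
    using d hv lift_node_eq[OF F S a \<kappa>_trees] trees.tr_node[OF S a \<kappa>_trees]
    unfolding t \<kappa>'_def by simp
  have "semv M L Map.empty \<eta> (Fun y (With ?H c)) (TArr Bop D) (lam M Bop D \<kappa>')"
    by (rule sem_continuation[OF H[unfolded C] c \<kappa>]) (use hv \<kappa>_trees in \<open>simp add: \<kappa>'_def\<close>)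
  moreover have "semc M L (Map.empty(x \<mapsto> Aop, k \<mapsto> TArr Bop D)) (\<eta>(x := a, k := lam M Bop D \<kappa>')) cop D
      (Hop op a \<kappa>')"
    using Hop clause S a F_cdom \<kappa>_trees unfolding \<kappa>'_def maps_into_def by auto
  ultimately have "semc M L (Map.empty(x \<mapsto> Aop)) (\<eta>(x := a)) (subst_c cop k (Fun y (With ?H c))) D
      (Hop op a \<kappa>')"
    by (rule sem_subst(2)[OF RL]) simp_all
  with sem_subst(2)[OF RL v] \<open>d = Hop op a \<kappa>'\<close> show ?thesis by simp
qed

lemma step_preserves_sem:
  "step c c' \<Longrightarrow> semc M L Map.empty \<eta> c C d \<Longrightarrow> semc M L Map.empty \<eta> c' C d"
proof (induction arbitrary: C d rule: step.induct)
  case (step_do c1 c1' x c2)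
  from step_do.prems obtain A B S E t f where C: "C = CTy B S E"
    and c1: "semc M L Map.empty \<eta> c1 (CTy A S E) t"
    and c2: "\<forall>a \<in> vdom M A. semc M L (Map.empty(x \<mapsto> A)) (\<eta>(x := a)) c2 (CTy B S E) (f a)"
    and lift: "lift_rel M A S f (node M B S) t d"
    by (auto elim: Do_semE)
  have "ctyp L Map.empty (Do x c1' c2) C"
    using step_preserves_typ[OF RL step.step_do[OF step_do.hyps] sem_typ(2)[OF step_do.prems]] .
  with step_do.IH[OF c1] c2 lift show ?case
    unfolding C by (blast intro: semv_semc.sem_do)
next
  case (step_with c c' v)
  then show ?case by (auto elim!: With_semE intro: semv_semc.sem_with)
qed (use ttv_neq_ffv in \<open>auto elim!: If_semE True_semE False_semE
      intro: sem_beta sem_do_return sem_do_op sem_with_return sem_with_op\<close>)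

end

end

theorem proposition6:
  fixes L :: logic and M :: "'u model" and c c' :: comp and C :: ctype
  assumes "reasoning_logic L"
    and "standard_model M"
    and "ctyp L Map.empty c C"
    and "step c c'"
  shows "ctyp L Map.empty c' C \<and>
         (\<forall>\<eta> d. semc M L Map.empty \<eta> c C d \<longrightarrow> semc M L Map.empty \<eta> c' C d)"
  using step_preserves_typ[OF assms(1,4,3)] step_preserves_sem[OF assms(2,1,4)] by blast

end
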